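(* Let $\Psi=(\Psi_1,\Psi_2)$ be a Clifford conservative vectorial FQ operation which is Clifford productive, i.e. $\Psi_1^2=\Psi_2^2=-1$ and $\Psi_1\Psi_2+\Psi_2\Psi_1=0$ as formal series. Then $$\Psi(A_1,A_2)=\cdots(1+U^{\langle3\rangle})(1+U^{\langle2\rangle})(1+U^{\langle1\rangle})\,(Q_1,Q_2)\,(1+U^{\langle1\rangle})^{-1}(1+U^{\langle2\rangle})^{-1}(1+U^{\langle3\rangle})^{-1}\cdots$$ (conjugation applied componentwise, the infinite products converging formally) for some scalar FQ operations $U^{\langle i\rangle}$ homogeneous of degree $i$ ($i\ge1$). Moreover, the $U^{\langle i\rangle}$ can be chosen to satisfy $((U^{\langle i\rangle})^0_{Q_1})^0_{Q_2}=0$, and with this requirement they are uniquely determined by $\Psi$. Conversely, any such sequence $U^{\langle i\rangle}$ yields by this formula a Clifford conservative, Clifford productive vectorial FQ operation.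
   Context: Setting. $(Q_1,Q_2)$ is a Clifford system: $Q_1^2=Q_2^2=-1$, $Q_1Q_2=-Q_2Q_1$. $R_1,R_2$ are formal noncommuting infinitesimal variables; one works in the real algebra generated by $Q_1,Q_2,R_1,R_2$ (free apart from the Clifford relations), completed with respect to total degree in $R_1,R_2$. Put $A_i=Q_i+R_i$. For $Q$ with $Q^2=-1$ and any $X$ put $X^0_Q=\frac12(X+Q^{-1}XQ)$, $X^1_Q=\frac12(X-Q^{-1}XQ)$. The split variables are $r_1,\dots,r_8$: for $j\in\{1,2\}$, $\iota_1,\iota_2\in\{0,1\}$, $r_{4(j-1)+2\iota_1+\iota_2+1}=((R_jQ_j^{-1})^{\iota_1}_{Q_1})^{\iota_2}_{Q_2}$ (so $r_k$ commutes with $Q_m$ if $\iota_m=0$, anticommutes if $\iota_m=1$). A scalar FQ operation around $(Q_1,Q_2)$ is an element $f_0(r_1,\dots,r_8)$ with $f_0$ a formal real noncommutative power series; it is homogeneous of degree $i$ if $f_0$ is. A vectorial FQ operation is $\Psi(A_1,A_2)=(f_1(r)Q_1,f_2(r)Q_2)$ with $f_1,f_2$ such series; it is Clifford conservative if both constant terms equal $1$. *)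

theory Defs
  imports Complex_Main
begin

text \<open>
  The letter (j, i1, i2) stands for
  r_{4(j-1)+2 i1 + i2 + 1}, where j = False means j = 1, j = True means j = 2,
  and i1, i2 are read as 0/1.  Thus r_k commutes with Q_m if i_m = 0 and
  anticommutes with Q_m if i_m = 1.

  The real algebra generated by Q1, Q2, R1, R2 (free apart from the Clifford
  relations), completed w.r.t. the degree in R1, R2, has a unique normal form
  as a formal sum of terms  c * Q1^a * Q2^b * r_w  with c real, a, b in {0,1}
  and w a word in the eight split variables (R_j = (sum of the four r's of j) * Q_j).
  An element is represented by its coefficient function  w, (a,b) |-> c.
\<close>

type_synonym letter = "bool \<times> bool \<times> bool"
type_synonym word = "letter list"
type_synonym elem = "word \<Rightarrow> bool \<times> bool \<Rightarrow> real"

definition cnt1 :: "word \<Rightarrow> nat" where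
  "cnt1 w = length (filter (\<lambda>l. fst (snd l)) w)"

definition cnt2 :: "word \<Rightarrow> nat" where
  "cnt2 w = length (filter (\<lambda>l. snd (snd l)) w)"

text \<open>sign exponent for  r_w * Q1^c Q2^d = +- Q1^c Q2^d * r_w\<close>
definition swap_par :: "word \<Rightarrow> bool \<times> bool \<Rightarrow> nat" where
  "swap_par w q = (if fst q then cnt1 w else 0) + (if snd q then cnt2 w else 0)"

text \<open>sign exponent for  (Q1^a Q2^b)(Q1^c Q2^d) = +- Q1^(a xor c) Q2^(b xor d)\<close>
definition qpar :: "bool \<times> bool \<Rightarrow> bool \<times> bool \<Rightarrow> nat" where
  "qpar p q = (if snd p \<and> fst q then 1 else 0) + (if fst p \<and> fst q then 1 else 0)
             + (if snd p \<and> snd q then 1 else 0)"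

definition el_mult :: "elem \<Rightarrow> elem \<Rightarrow> elem" where
  "el_mult X Y = (\<lambda>u p. \<Sum>k\<le>length u. \<Sum>q\<in>(UNIV :: (bool \<times> bool) set).
      (let c = (fst q \<noteq> fst p, snd q \<noteq> snd p) in
        (-1::real) ^ (qpar q c + swap_par (take k u) c) * X (take k u) q * Y (drop k u) c))"

definition el_add :: "elem \<Rightarrow> elem \<Rightarrow> elem" where
  "el_add X Y = (\<lambda>u p. X u p + Y u p)"

definition el_scale :: "real \<Rightarrow> elem \<Rightarrow> elem" where
  "el_scale c X = (\<lambda>u p. c * X u p)"

definition el_zero :: elem where
  "el_zero = (\<lambda>u p. 0)"

definition el_one :: elem where
  "el_one = (\<lambda>u p. if u = [] \<and> p = (False, False) then 1 else 0)"

definition el_Q1 :: elem where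
  "el_Q1 = (\<lambda>u p. if u = [] \<and> p = (True, False) then 1 else 0)"

definition el_Q2 :: elem where
  "el_Q2 = (\<lambda>u p. if u = [] \<and> p = (False, True) then 1 else 0)"

definition el_r :: "letter \<Rightarrow> elem" where
  "el_r l = (\<lambda>u p. if u = [l] \<and> p = (False, False) then 1 else 0)"

definition el_inv :: "elem \<Rightarrow> elem" where
  "el_inv X = (THE Y. el_mult X Y = el_one \<and> el_mult Y X = el_one)"

definition half0 :: "elem \<Rightarrow> elem \<Rightarrow> elem" where
  "half0 Q X = el_scale (1/2) (el_add X (el_mult (el_mult (el_inv Q) X) Q))"

definition half1 :: "elem \<Rightarrow> elem \<Rightarrow> elem" where
  "half1 Q X = el_scale (1/2) (el_add X (el_scale (-1) (el_mult (el_mult (el_inv Q) X) Q)))"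

text \<open>A formal real noncommutative power series in r_1..r_8 is a coefficient
  function on words; the scalar FQ operation f_0(r_1,...,r_8) is the element
  sum_w f_0(w) r_w.\<close>
type_synonym series = "word \<Rightarrow> real"

definition fq_scalar :: "series \<Rightarrow> elem" where
  "fq_scalar f = (\<lambda>u p. if p = (False, False) then f u else 0)"

definition homogeneous :: "nat \<Rightarrow> series \<Rightarrow> bool" where
  "homogeneous i f \<longleftrightarrow> (\<forall>w. length w \<noteq> i \<longrightarrow> f w = 0)"

definition Psi1 :: "series \<Rightarrow> elem" where
  "Psi1 f1 = el_mult (fq_scalar f1) el_Q1"

definition Psi2 :: "series \<Rightarrow> elem" where
  "Psi2 f2 = el_mult (fq_scalar f2) el_Q2"

definition clifford_conservative :: "series \<Rightarrow> series \<Rightarrow> bool" where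
  "clifford_conservative f1 f2 \<longleftrightarrow> f1 [] = 1 \<and> f2 [] = 1"

definition clifford_productive :: "series \<Rightarrow> series \<Rightarrow> bool" where
  "clifford_productive f1 f2 \<longleftrightarrow>
     el_mult (Psi1 f1) (Psi1 f1) = el_scale (-1) el_one \<and>
     el_mult (Psi2 f2) (Psi2 f2) = el_scale (-1) el_one \<and>
     el_add (el_mult (Psi1 f1) (Psi2 f2)) (el_mult (Psi2 f2) (Psi1 f1)) = el_zero"

primrec Pprod :: "(nat \<Rightarrow> series) \<Rightarrow> nat \<Rightarrow> elem" where
  "Pprod U 0 = el_one"
| "Pprod U (Suc n) = el_mult (el_add el_one (fq_scalar (U (Suc n)))) (Pprod U n)"

primrec Pinv :: "(nat \<Rightarrow> series) \<Rightarrow> nat \<Rightarrow> elem" where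
  "Pinv U 0 = el_one"
| "Pinv U (Suc n) = el_mult (Pinv U n) (el_inv (el_add el_one (fq_scalar (U (Suc n)))))"

definition conj_partial :: "(nat \<Rightarrow> series) \<Rightarrow> nat \<Rightarrow> elem \<Rightarrow> elem" where
  "conj_partial U n Q = el_mult (el_mult (Pprod U n) Q) (Pinv U n)"

definition formal_limit :: "(nat \<Rightarrow> elem) \<Rightarrow> elem \<Rightarrow> bool" where
  "formal_limit S X \<longleftrightarrow> (\<forall>u p. eventually (\<lambda>n. S n u p = X u p) sequentially)"

definition represents :: "(nat \<Rightarrow> series) \<Rightarrow> series \<Rightarrow> series \<Rightarrow> bool" where
  "represents U f1 f2 \<longleftrightarrow>
     formal_limit (\<lambda>n. conj_partial U n el_Q1) (Psi1 f1) \<and>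
     formal_limit (\<lambda>n. conj_partial U n el_Q2) (Psi2 f2)"

definition admissible :: "(nat \<Rightarrow> series) \<Rightarrow> bool" where
  "admissible U \<longleftrightarrow> (\<forall>i\<ge>1. homogeneous i (U i))"

definition normalized :: "(nat \<Rightarrow> series) \<Rightarrow> bool" where
  "normalized U \<longleftrightarrow> (\<forall>i\<ge>1. half0 el_Q2 (half0 el_Q1 (fq_scalar (U i))) = el_zero)"

end

theory Submission
  imports Defs
begin

text \<open>
  Work in the completed algebra as a ring, measuring smallness by the order of an element (the least
  length of a word carrying a nonzero coefficient).  Scalars \<open>1 + V\<close> with \<open>V\<close> of positive order are
  inverted by geometric series, so the partial conjugations by \<open>(1 + U\<langle>n\<rangle>) \<cdots> (1 + U\<langle>1\<rangle>)\<close> converge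
  formally, and the limits inherit the Clifford relations of \<open>Q\<^sub>1, Q\<^sub>2\<close>; this is the converse.

  For existence the \<open>U\<langle>N\<rangle>\<close> are built degree by degree.  If the conjugates \<open>C\<^sub>m\<close> of \<open>Q\<^sub>m\<close> agree with
  \<open>\<Psi>\<^sub>m\<close> below degree \<open>N\<close>, the Clifford relations of \<open>\<Psi>\<close> and of the \<open>C\<^sub>m\<close> force the degree-\<open>N\<close>
  discrepancies \<open>D\<^sub>m = \<Psi>\<^sub>m - C\<^sub>m\<close> to anticommute with \<open>Q\<^sub>m\<close> and to satisfy one mixed relation, and
  these are exactly the conditions for \<open>D\<^sub>m = V Q\<^sub>m - Q\<^sub>m V\<close> to have a common scalar solution \<open>V\<close> of
  degree \<open>N\<close>.  Conjugating once more by \<open>1 + V\<close> adds \<open>V Q\<^sub>m - Q\<^sub>m V\<close> to first order and so removes the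
  discrepancy.  The solution \<open>V\<close> is unique up to words commuting with both \<open>Q\<^sub>1\<close> and \<open>Q\<^sub>2\<close>, and the
  normalization discards exactly those, which gives uniqueness.
\<close>

text \<open>With \<open>Q\<^bsup>(a,b)\<^esup> = Q\<^sub>1\<^bsup>a\<^esup> Q\<^sub>2\<^bsup>b\<^esup>\<close>: \<open>Q\<^bsup>q\<^esup> Q\<^bsup>c\<^esup> = mono_sign q c \<cdot> Q\<^bsup>grade_add q c\<^esup>\<close> and
  \<open>r\<^sub>w Q\<^bsup>c\<^esup> = wsign w c \<cdot> Q\<^bsup>c\<^esup> r\<^sub>w\<close>.\<close>

definition grade_add :: "bool \<times> bool \<Rightarrow> bool \<times> bool \<Rightarrow> bool \<times> bool" where
  "grade_add q c = (fst q \<noteq> fst c, snd q \<noteq> snd c)"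

definition mono_sign :: "bool \<times> bool \<Rightarrow> bool \<times> bool \<Rightarrow> real" where
  "mono_sign q c = (-1) ^ qpar q c"

definition wsign1 :: "word \<Rightarrow> real" where
  "wsign1 w = (-1) ^ cnt1 w"

definition wsign2 :: "word \<Rightarrow> real" where
  "wsign2 w = (-1) ^ cnt2 w"

definition wsign :: "word \<Rightarrow> bool \<times> bool \<Rightarrow> real" where
  "wsign w c = (if fst c then wsign1 w else 1) * (if snd c then wsign2 w else 1)"

lemma wsign1_append [simp]: "wsign1 (a @ b) = wsign1 a * wsign1 b"
  by (simp add: wsign1_def cnt1_def power_add)

lemma wsign2_append [simp]: "wsign2 (a @ b) = wsign2 a * wsign2 b"
  by (simp add: wsign2_def cnt2_def power_add)

lemma wsign1_square [simp]: "wsign1 w * wsign1 w = 1"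
  by (simp add: wsign1_def flip: power_add)

lemma wsign2_square [simp]: "wsign2 w * wsign2 w = 1"
  by (simp add: wsign2_def flip: power_add)

lemma wsign1_cases: "wsign1 w = 1 \<or> wsign1 w = -1"
  by (cases "even (cnt1 w)") (auto simp: wsign1_def)

lemma wsign2_cases: "wsign2 w = 1 \<or> wsign2 w = -1"
  by (cases "even (cnt2 w)") (auto simp: wsign2_def)

lemma wsign_Nil [simp]: "wsign [] c = 1"
  by (simp add: wsign_def wsign1_def wsign2_def cnt1_def cnt2_def)

lemma wsign_zero_grade [simp]: "wsign w (False, False) = 1"
  by (simp add: wsign_def)

lemma wsign_append: "wsign (a @ b) c = wsign a c * wsign b c"
  by (simp add: wsign_def)

lemma wsign_grade_add: "wsign w c * wsign w d = wsign w (grade_add c d)"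
  by (cases c; cases d) (auto simp: wsign_def grade_add_def algebra_simps)

lemma mono_sign_zero [simp]: "mono_sign (False, False) c = 1" "mono_sign q (False, False) = 1"
  by (auto simp: mono_sign_def qpar_def)

lemma mono_sign_cocycle:
  "mono_sign (grade_add a b) d * mono_sign a b = mono_sign a (grade_add b d) * mono_sign b d"
  by (cases a; cases b; cases d) (auto simp: mono_sign_def grade_add_def qpar_def)

lemma grade_add_simps [simp]:
  "grade_add a a = (False, False)" "grade_add (False, False) a = a" "grade_add a (False, False) = a"
  "grade_add a (grade_add a b) = b" "grade_add (grade_add a q) (grade_add a p) = grade_add q p"
  by (auto simp: grade_add_def prod_eq_iff)

lemma sum_grade_add_reindex: "(\<Sum>c\<in>UNIV. f c) = (\<Sum>q\<in>UNIV. f (grade_add a q))"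
  by (rule sum.reindex_bij_witness[where i = "grade_add a" and j = "grade_add a"]) auto

lemma sum_UNIV_grades:
  "(\<Sum>q\<in>(UNIV :: (bool \<times> bool) set). f q)
     = f (False, False) + f (False, True) + f (True, False) + f (True, True)"
proof -
  have grades: "(UNIV :: (bool \<times> bool) set) = {(False, False), (False, True), (True, False), (True, True)}"
    by auto
  show ?thesis by (subst grades) (simp add: add.assoc)
qed

lemma el_mult_signed:
  "el_mult X Y u p = (\<Sum>k\<le>length u. \<Sum>q\<in>UNIV.
     mono_sign q (grade_add q p) * wsign (take k u) (grade_add q p) * X (take k u) q * Y (drop k u) (grade_add q p))"
  unfolding el_mult_def Let_def
  by (intro sum.cong refl)
     (simp add: mono_sign_def wsign_def grade_add_def swap_par_def wsign1_def wsign2_def power_add)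

lemma sign_cocycle_words:
  "mono_sign q (grade_add q p) * wsign (A @ B) (grade_add q p) * (mono_sign q' (grade_add q' q) * wsign A (grade_add q' q)) =
   mono_sign q' (grade_add q' p) * wsign A (grade_add q' p) * (mono_sign (grade_add q' q) (grade_add q p) * wsign B (grade_add q p))"
proof -
  have "grade_add (grade_add q p) (grade_add q' q) = grade_add q' p"
    by (auto simp: grade_add_def prod_eq_iff)
  then have W: "wsign A (grade_add q p) * wsign A (grade_add q' q) = wsign A (grade_add q' p)"
    by (simp add: wsign_grade_add)
  have "grade_add (grade_add q' q) (grade_add q p) = grade_add q' p"
    by (auto simp: grade_add_def prod_eq_iff)
  then have M: "mono_sign q (grade_add q p) * mono_sign q' (grade_add q' q)
      = mono_sign q' (grade_add q' p) * mono_sign (grade_add q' q) (grade_add q p)"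
    using mono_sign_cocycle[of q' "grade_add q' q" "grade_add q p"] by simp
  have "mono_sign q (grade_add q p) * wsign (A @ B) (grade_add q p) * (mono_sign q' (grade_add q' q) * wsign A (grade_add q' q))
     = (mono_sign q (grade_add q p) * mono_sign q' (grade_add q' q))
       * (wsign A (grade_add q p) * wsign A (grade_add q' q)) * wsign B (grade_add q p)"
    by (simp add: wsign_append algebra_simps)
  also have "\<dots> = mono_sign q' (grade_add q' p) * mono_sign (grade_add q' q) (grade_add q p)
       * wsign A (grade_add q' p) * wsign B (grade_add q p)"
    by (simp only: W M)
  finally show ?thesis
    by (simp add: algebra_simps)
qed

lemma sum_triangle_split:
  "(\<Sum>k\<le>n. \<Sum>j\<le>k. G j (k - j)) = (\<Sum>j\<le>(n::nat). \<Sum>i\<le>n - j. G j i)"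
proof -
  have "(\<Sum>k\<le>n. \<Sum>j\<le>k. G j (k - j)) = (\<Sum>(j, i)\<in>{(j, i). j + i \<le> n}. G j i)"
    by (rule sum.triangle_reindex_eq[symmetric])
  also have "{(j, i). j + i \<le> n} = Sigma {..n} (\<lambda>j. {..n - j})"
    by auto
  also have "(\<Sum>(j, i)\<in>Sigma {..n} (\<lambda>j. {..n - j}). G j i) = (\<Sum>j\<le>n. \<Sum>i\<le>n - j. G j i)"
    by (rule sum.Sigma[symmetric]) auto
  finally show ?thesis .
qed

section \<open>The completed algebra as a ring\<close>

definition triple_term :: "elem \<Rightarrow> elem \<Rightarrow> elem \<Rightarrow> word \<Rightarrow> bool \<times> bool \<Rightarrow> nat \<Rightarrow> nat \<Rightarrow> real" where
  "triple_term X Y Z u p j i = (\<Sum>q\<in>UNIV. \<Sum>q'\<in>UNIV.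
     mono_sign q' (grade_add q' p) * wsign (take j u) (grade_add q' p) * X (take j u) q' *
     (mono_sign (grade_add q' q) (grade_add q p) * wsign (take i (drop j u)) (grade_add q p) *
      Y (take i (drop j u)) (grade_add q' q) * Z (drop i (drop j u)) (grade_add q p)))"

lemma el_mult_assoc_left:
  "el_mult (el_mult X Y) Z u p = (\<Sum>k\<le>length u. \<Sum>j\<le>k. triple_term X Y Z u p j (k - j))"
  unfolding el_mult_signed[of _ _ u]
proof (rule sum.cong[OF refl])
  fix k assume k: "k \<in> {..length u}"
  have "(\<Sum>q\<in>UNIV. mono_sign q (grade_add q p) * wsign (take k u) (grade_add q p) *
        (\<Sum>j\<le>length (take k u). \<Sum>q'\<in>UNIV. mono_sign q' (grade_add q' q) * wsign (take j (take k u)) (grade_add q' q) * X (take j (take k u)) q' * Y (drop j (take k u)) (grade_add q' q)) *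
        Z (drop k u) (grade_add q p))
      = (\<Sum>q\<in>UNIV. \<Sum>j\<le>k. \<Sum>q'\<in>UNIV. mono_sign q (grade_add q p) * wsign (take k u) (grade_add q p) *
        (mono_sign q' (grade_add q' q) * wsign (take j (take k u)) (grade_add q' q) * X (take j (take k u)) q' * Y (drop j (take k u)) (grade_add q' q)) *
        Z (drop k u) (grade_add q p))"
    using k by (simp add: sum_distrib_left sum_distrib_right min_def)
  also have "\<dots> = (\<Sum>j\<le>k. \<Sum>q\<in>UNIV. \<Sum>q'\<in>UNIV. mono_sign q (grade_add q p) * wsign (take k u) (grade_add q p) *
        (mono_sign q' (grade_add q' q) * wsign (take j (take k u)) (grade_add q' q) * X (take j (take k u)) q' * Y (drop j (take k u)) (grade_add q' q)) *
        Z (drop k u) (grade_add q p))"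
    by (rule sum.swap)
  also have "\<dots> = (\<Sum>j\<le>k. triple_term X Y Z u p j (k-j))"
    unfolding triple_term_def
  proof (intro sum.cong refl)
    fix j q q' assume j: "j \<in> {..k}"
    define i where "i = k - j"
    have kk: "k = j + i"
      using j i_def by auto
    have t1: "take j (take k u) = take j u"
      using j by (simp add: min_def)
    have t2: "drop j (take k u) = take i (drop j u)"
      by (simp add: kk take_drop add.commute)
    have t3: "drop k u = drop i (drop j u)"
      by (simp add: kk add.commute)
    have t4: "take k u = take j u @ take i (drop j u)"
      by (simp add: kk take_add)
    have S: "mono_sign q (grade_add q p) * wsign (take j u @ take i (drop j u)) (grade_add q p) * (mono_sign q' (grade_add q' q) * wsign (take j u) (grade_add q' q)) *
      (X (take j u) q' * Y (take i (drop j u)) (grade_add q' q) * Z (drop i (drop j u)) (grade_add q p)) =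
      mono_sign q' (grade_add q' p) * wsign (take j u) (grade_add q' p) * (mono_sign (grade_add q' q) (grade_add q p) * wsign (take i (drop j u)) (grade_add q p)) *
      (X (take j u) q' * Y (take i (drop j u)) (grade_add q' q) * Z (drop i (drop j u)) (grade_add q p))"
      by (simp only: sign_cocycle_words)
    show "mono_sign q (grade_add q p) * wsign (take k u) (grade_add q p) *
        (mono_sign q' (grade_add q' q) * wsign (take j (take k u)) (grade_add q' q) * X (take j (take k u)) q' * Y (drop j (take k u)) (grade_add q' q)) *
        Z (drop k u) (grade_add q p) =
       mono_sign q' (grade_add q' p) * wsign (take j u) (grade_add q' p) * X (take j u) q' *
        (mono_sign (grade_add q' q) (grade_add q p) * wsign (take (k-j) (drop j u)) (grade_add q p) * Y (take (k-j) (drop j u)) (grade_add q' q) * Z (drop (k-j) (drop j u)) (grade_add q p))"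
      using S unfolding t1 t2 t3 i_def[symmetric] unfolding t4 by (simp only: mult_ac)
  qed
  finally show "(\<Sum>q\<in>UNIV. mono_sign q (grade_add q p) * wsign (take k u) (grade_add q p) *
        el_mult X Y (take k u) q * Z (drop k u) (grade_add q p)) = (\<Sum>j\<le>k. triple_term X Y Z u p j (k-j))"
    by (simp add: el_mult_signed)
qed

lemma el_mult_assoc_right:
  "el_mult X (el_mult Y Z) u p = (\<Sum>j\<le>length u. \<Sum>i\<le>length u - j. triple_term X Y Z u p j i)"
  unfolding el_mult_signed[of X _ u]
proof (rule sum.cong[OF refl])
  fix j assume j: "j \<in> {..length u}"
  have "(\<Sum>q'\<in>UNIV. mono_sign q' (grade_add q' p) * wsign (take j u) (grade_add q' p) * X (take j u) q' * el_mult Y Z (drop j u) (grade_add q' p))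
   = (\<Sum>q'\<in>UNIV. mono_sign q' (grade_add q' p) * wsign (take j u) (grade_add q' p) * X (take j u) q' *
        (\<Sum>i\<le>length u - j. \<Sum>q\<in>UNIV. mono_sign (grade_add q' q) (grade_add q p) * wsign (take i (drop j u)) (grade_add q p) * Y (take i (drop j u)) (grade_add q' q) * Z (drop i (drop j u)) (grade_add q p)))"
  proof (rule sum.cong[OF refl])
    fix q'
    show "mono_sign q' (grade_add q' p) * wsign (take j u) (grade_add q' p) * X (take j u) q' * el_mult Y Z (drop j u) (grade_add q' p) =
      mono_sign q' (grade_add q' p) * wsign (take j u) (grade_add q' p) * X (take j u) q' *
        (\<Sum>i\<le>length u - j. \<Sum>q\<in>UNIV. mono_sign (grade_add q' q) (grade_add q p) * wsign (take i (drop j u)) (grade_add q p) * Y (take i (drop j u)) (grade_add q' q) * Z (drop i (drop j u)) (grade_add q p))"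
      unfolding el_mult_signed[of Y] length_drop
      by (subst sum_grade_add_reindex[where a = q']) simp
  qed
  also have "\<dots> = (\<Sum>q'\<in>UNIV. \<Sum>i\<le>length u - j. \<Sum>q\<in>UNIV. mono_sign q' (grade_add q' p) * wsign (take j u) (grade_add q' p) * X (take j u) q' *
        (mono_sign (grade_add q' q) (grade_add q p) * wsign (take i (drop j u)) (grade_add q p) * Y (take i (drop j u)) (grade_add q' q) * Z (drop i (drop j u)) (grade_add q p)))"
    by (simp add: sum_distrib_left)
  also have "\<dots> = (\<Sum>i\<le>length u - j. \<Sum>q'\<in>UNIV. \<Sum>q\<in>UNIV. mono_sign q' (grade_add q' p) * wsign (take j u) (grade_add q' p) * X (take j u) q' *
        (mono_sign (grade_add q' q) (grade_add q p) * wsign (take i (drop j u)) (grade_add q p) * Y (take i (drop j u)) (grade_add q' q) * Z (drop i (drop j u)) (grade_add q p)))"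
    by (rule sum.swap)
  also have "\<dots> = (\<Sum>i\<le>length u - j. triple_term X Y Z u p j i)"
    unfolding triple_term_def by (intro sum.cong refl sum.swap)
  finally show "(\<Sum>q'\<in>UNIV. mono_sign q' (grade_add q' p) * wsign (take j u) (grade_add q' p) * X (take j u) q' * el_mult Y Z (drop j u) (grade_add q' p))
    = (\<Sum>i\<le>length u - j. triple_term X Y Z u p j i)" .
qed

lemma el_mult_assoc: "el_mult (el_mult X Y) Z = el_mult X (el_mult Y Z)"
  by (intro ext) (simp only: el_mult_assoc_left el_mult_assoc_right sum_triangle_split)

definition const_elem :: "elem \<Rightarrow> bool" where
  "const_elem X \<longleftrightarrow> (\<forall>w q. w \<noteq> [] \<longrightarrow> X w q = 0)"

lemma el_mult_const_left:
  assumes "const_elem X"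
  shows "el_mult X Y u p = (\<Sum>q\<in>UNIV. mono_sign q (grade_add q p) * X [] q * Y u (grade_add q p))"
proof -
  define f where "f k = (\<Sum>q\<in>UNIV. mono_sign q (grade_add q p) * wsign (take k u) (grade_add q p) *
      X (take k u) q * Y (drop k u) (grade_add q p))" for k
  have "f k = 0" if "k \<in> {..length u} - {0}" for k
  proof -
    have "take k u \<noteq> []"
      using that by auto
    then have H: "\<forall>q. X (take k u) q = 0"
      using assms by (simp add: const_elem_def)
    show ?thesis by (simp add: f_def H)
  qed
  then have "sum f {..length u} = f 0"
    by (subst sum.remove[of _ 0]) auto
  then show ?thesis
    by (simp add: el_mult_signed f_def)
qed

lemma el_mult_const_right:
  assumes "const_elem Y"
  shows "el_mult X Y u p = (\<Sum>q\<in>UNIV. mono_sign q (grade_add q p) * wsign u (grade_add q p) * X u q * Y [] (grade_add q p))"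
proof -
  define f where "f k = (\<Sum>q\<in>UNIV. mono_sign q (grade_add q p) * wsign (take k u) (grade_add q p) *
      X (take k u) q * Y (drop k u) (grade_add q p))" for k
  have "f k = 0" if "k \<in> {..length u} - {length u}" for k
  proof -
    have "drop k u \<noteq> []"
      using that by auto
    then have H: "\<forall>q. Y (drop k u) q = 0"
      using assms by (simp add: const_elem_def)
    show ?thesis by (simp add: f_def H)
  qed
  then have "sum f {..length u} = f (length u)"
    by (subst sum.remove[of _ "length u"]) auto
  then show ?thesis
    by (simp add: el_mult_signed f_def)
qed

lemma const_elem_one [simp]: "const_elem el_one"
  by (simp add: const_elem_def el_one_def)

lemma el_mult_one_left: "el_mult el_one X = X"
  by (intro ext) (simp only: el_mult_const_left[OF const_elem_one], simp add: sum_UNIV_grades el_one_def)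

lemma el_mult_one_right: "el_mult X el_one = X"
  by (intro ext) (simp only: el_mult_const_right[OF const_elem_one], auto simp: sum_UNIV_grades el_one_def grade_add_def wsign_def)

lemma el_mult_add_left: "el_mult (el_add X Y) Z = el_add (el_mult X Z) (el_mult Y Z)"
  unfolding el_mult_def el_add_def Let_def
  by (intro ext) (simp add: distrib_left distrib_right sum.distrib)

lemma el_mult_add_right: "el_mult Z (el_add X Y) = el_add (el_mult Z X) (el_mult Z Y)"
  unfolding el_mult_def el_add_def Let_def
  by (intro ext) (simp add: distrib_left distrib_right sum.distrib)

typedef alg = "UNIV :: elem set"
  morphisms coeff Abs_alg
  by auto

setup_lifting type_definition_alg

instantiation alg :: ring_1
begin

lift_definition zero_alg :: alg is el_zero .
lift_definition one_alg :: alg is el_one .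
lift_definition plus_alg :: "alg \<Rightarrow> alg \<Rightarrow> alg" is el_add .
lift_definition minus_alg :: "alg \<Rightarrow> alg \<Rightarrow> alg" is "\<lambda>X Y. el_add X (el_scale (-1) Y)" .
lift_definition uminus_alg :: "alg \<Rightarrow> alg" is "el_scale (-1)" .
lift_definition times_alg :: "alg \<Rightarrow> alg \<Rightarrow> alg" is el_mult .

instance
proof
  fix a b c :: alg
  show "a * b * c = a * (b * c)"
    by transfer (rule el_mult_assoc)
  show "a + b + c = a + (b + c)" "a + b = b + a" "0 + a = a" "- a + a = 0" "a - b = a + - b"
    by (transfer; simp add: el_add_def el_zero_def el_scale_def fun_eq_iff)+
  show "1 * a = a" "a * 1 = a"
    by (transfer; rule el_mult_one_left el_mult_one_right)+
  show "(a + b) * c = a * c + b * c" "a * (b + c) = a * b + a * c"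
    by (transfer; rule el_mult_add_left el_mult_add_right)+
  show "(0::alg) \<noteq> 1"
    by transfer (metis el_one_def el_zero_def zero_neq_one)
qed

end

lemma coeff_mult: "coeff (x * y) = el_mult (coeff x) (coeff y)"
  by (simp add: times_alg.rep_eq)

lemma coeff_add: "coeff (x + y) u p = coeff x u p + coeff y u p"
  by (simp add: plus_alg.rep_eq el_add_def)

lemma coeff_diff: "coeff (x - y) u p = coeff x u p - coeff y u p"
  by (simp add: minus_alg.rep_eq el_add_def el_scale_def)

lemma coeff_uminus: "coeff (- x) u p = - coeff x u p"
  by (simp add: uminus_alg.rep_eq el_scale_def)

lemma coeff_zero: "coeff 0 u p = 0"
  by (simp add: zero_alg.rep_eq el_zero_def)

lemma coeff_one: "coeff 1 u p = (if u = [] \<and> p = (False, False) then 1 else 0)"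
  by (simp add: one_alg.rep_eq el_one_def)

lemma alg_eqI: "(\<And>u p. coeff x u p = coeff y u p) \<Longrightarrow> x = y"
  by (metis coeff_inject ext)

definition Qmono :: "bool \<times> bool \<Rightarrow> alg" where
  "Qmono a = Abs_alg (\<lambda>u p. if u = [] \<and> p = a then 1 else 0)"

abbreviation Q1 :: alg where "Q1 \<equiv> Qmono (True, False)"
abbreviation Q2 :: alg where "Q2 \<equiv> Qmono (False, True)"

definition scalar :: "series \<Rightarrow> alg" where
  "scalar f = Abs_alg (fq_scalar f)"

lemma coeff_Qmono: "coeff (Qmono a) u p = (if u = [] \<and> p = a then 1 else 0)"
  by (simp add: Qmono_def Abs_alg_inverse)

lemma coeff_scalar: "coeff (scalar f) u p = (if p = (False, False) then f u else 0)"
  by (simp add: scalar_def fq_scalar_def Abs_alg_inverse)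

lemma el_Q1_eq: "el_Q1 = coeff Q1" and el_Q2_eq: "el_Q2 = coeff Q2"
  by (simp_all add: fun_eq_iff coeff_Qmono el_Q1_def el_Q2_def)

lemma fq_scalar_eq: "fq_scalar f = coeff (scalar f)"
  by (simp add: scalar_def Abs_alg_inverse)

lemma coeff_Qmono_mult: "coeff (Qmono a * x) u p = mono_sign a (grade_add a p) * coeff x u (grade_add a p)"
proof -
  have C: "const_elem (coeff (Qmono a))"
    by (simp add: const_elem_def coeff_Qmono)
  show ?thesis
    unfolding coeff_mult el_mult_const_left[OF C] sum_UNIV_grades
    by (cases a) (auto simp: coeff_Qmono)
qed

lemma coeff_mult_Qmono:
  "coeff (x * Qmono a) u p = mono_sign (grade_add a p) a * wsign u a * coeff x u (grade_add a p)"
proof -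
  have C: "const_elem (coeff (Qmono a))"
    by (simp add: const_elem_def coeff_Qmono)
  show ?thesis
    unfolding coeff_mult el_mult_const_right[OF C] sum_UNIV_grades
    by (cases a; cases p) (auto simp: coeff_Qmono grade_add_def)
qed

lemma mono_sign_self: "a \<noteq> (False, False) \<Longrightarrow> mono_sign a a = -1"
  by (cases a) (auto simp: mono_sign_def qpar_def)

lemma Qmono_square: "a \<noteq> (False, False) \<Longrightarrow> Qmono a * Qmono a = -1"
  by (rule alg_eqI) (auto simp: coeff_Qmono_mult coeff_Qmono coeff_uminus coeff_one mono_sign_self grade_add_def prod_eq_iff)

lemma Q1_Q2_anticommute: "Q1 * Q2 = - (Q2 * Q1)"
  by (rule alg_eqI) (auto simp: coeff_Qmono_mult coeff_Qmono coeff_uminus grade_add_def mono_sign_def qpar_def)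

section \<open>Grading and order\<close>

declare split_paired_All [simp del] split_paired_Ex [simp del]

definition graded :: "bool \<times> bool \<Rightarrow> alg \<Rightarrow> bool" where
  "graded a x \<longleftrightarrow> (\<forall>u p. p \<noteq> a \<longrightarrow> coeff x u p = 0)"

definition order_ge :: "nat \<Rightarrow> alg \<Rightarrow> bool" where
  "order_ge n x \<longleftrightarrow> (\<forall>u p. length u < n \<longrightarrow> coeff x u p = 0)"

lemma gradedD: "graded a x \<Longrightarrow> p \<noteq> a \<Longrightarrow> coeff x u p = 0"
  by (simp add: graded_def)

lemma order_geD: "order_ge n x \<Longrightarrow> length u < n \<Longrightarrow> coeff x u p = 0"
  by (simp add: order_ge_def)

lemma graded_mult:
  assumes "graded a x" "graded b y"
  shows "graded (grade_add a b) (x * y)"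
  unfolding graded_def
proof (intro allI impI)
  fix u p assume p: "p \<noteq> grade_add a b"
  have vanish: "coeff x (take k u) q * coeff y (drop k u) (grade_add q p) = 0" for k q
  proof (cases "q = a")
    case True
    then have "grade_add q p \<noteq> b"
      using p by (auto simp: grade_add_def prod_eq_iff)
    then show ?thesis using assms(2) by (simp add: gradedD)
  next
    case False
    then show ?thesis using assms(1) by (simp add: gradedD)
  qed
  show "coeff (x * y) u p = 0"
    unfolding coeff_mult el_mult_signed
    by (intro sum.neutral ballI) (metis (no_types) vanish atMost_iff mult.assoc mult_zero_right)
qed

lemma order_ge_mult:
  assumes "order_ge m x" "order_ge n y"
  shows "order_ge (m + n) (x * y)"
  unfolding order_ge_def
proof (intro allI impI)
  fix u :: word and p assume u: "length u < m + n"
  have vanish: "coeff x (take k u) q * coeff y (drop k u) (grade_add q p) = 0" if "k \<le> length u" for k q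
  proof (cases "k < m")
    case True
    then show ?thesis using assms(1) that by (simp add: order_geD)
  next
    case False
    then show ?thesis using assms(2) that u by (simp add: order_geD)
  qed
  show "coeff (x * y) u p = 0"
    unfolding coeff_mult el_mult_signed
    by (intro sum.neutral ballI) (metis (no_types) vanish atMost_iff mult.assoc mult_zero_right)
qed

lemma graded_add: "graded a x \<Longrightarrow> graded a y \<Longrightarrow> graded a (x + y)"
  and graded_diff: "graded a x \<Longrightarrow> graded a y \<Longrightarrow> graded a (x - y)"
  and graded_zero: "graded a 0"
  and graded_one: "graded (False, False) 1"
  and graded_scalar: "graded (False, False) (scalar f)"
  and graded_Qmono: "graded a (Qmono a)"
  by (simp_all add: graded_def coeff_add coeff_diff coeff_zero coeff_one coeff_scalar coeff_Qmono)

lemma graded_mult_scalar: "graded (False, False) x \<Longrightarrow> graded (False, False) y \<Longrightarrow> graded (False, False) (x * y)"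
  using graded_mult[of "(False, False)" x "(False, False)" y] by simp

lemma graded_power_scalar: "graded (False, False) x \<Longrightarrow> graded (False, False) (x ^ n)"
  by (induction n) (auto simp: graded_one graded_mult_scalar)

lemma graded_sum_scalar: "(\<And>k. graded (False, False) (f k)) \<Longrightarrow> graded (False, False) (\<Sum>k<(n::nat). f k)"
  by (induction n) (auto simp: graded_add graded_zero)

lemma order_ge_add: "order_ge n x \<Longrightarrow> order_ge n y \<Longrightarrow> order_ge n (x + y)"
  and order_ge_diff: "order_ge n x \<Longrightarrow> order_ge n y \<Longrightarrow> order_ge n (x - y)"
  and order_ge_uminus: "order_ge n x \<Longrightarrow> order_ge n (- x)"
  and order_ge_zero: "order_ge n 0"
  and order_ge_0: "order_ge 0 x"
  and order_ge_mono: "order_ge n x \<Longrightarrow> m \<le> n \<Longrightarrow> order_ge m x"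
  by (simp_all add: order_ge_def coeff_add coeff_diff coeff_uminus coeff_zero)

lemma order_ge_mult_left: "order_ge n y \<Longrightarrow> order_ge n (x * y)"
  using order_ge_mult[OF order_ge_0, of n y x] by simp

lemma order_ge_mult_right: "order_ge n x \<Longrightarrow> order_ge n (x * y)"
  using order_ge_mult[OF _ order_ge_0, of n x y] by simp

lemma order_ge_all_zero: "(\<And>n. order_ge n x) \<Longrightarrow> x = 0"
  by (rule alg_eqI) (auto simp: order_ge_def coeff_zero)

lemma order_ge_power: "order_ge 1 z \<Longrightarrow> order_ge n (z ^ n)"
proof (induction n)
  case (Suc n)
  then show ?case using order_ge_mult[of 1 z n "z ^ n"] by simp
qed (simp add: order_ge_0)

lemma order_ge_sum: "(\<And>k. k \<in> A \<Longrightarrow> order_ge n (f k)) \<Longrightarrow> order_ge n (sum f A)"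
  by (induction A rule: infinite_finite_induct) (auto simp: order_ge_zero order_ge_add)

lemma order_ge_mult_cong: "order_ge n (x - x') \<Longrightarrow> order_ge n (y - y') \<Longrightarrow> order_ge n (x * y - x' * y')"
proof -
  assume "order_ge n (x - x')" "order_ge n (y - y')"
  moreover have "x * y - x' * y' = (x - x') * y + x' * (y - y')"
    by (simp add: algebra_simps)
  ultimately show ?thesis
    by (simp add: order_ge_add order_ge_mult_left order_ge_mult_right)
qed

lemma order_ge_scalar: "homogeneous i v \<Longrightarrow> order_ge i (scalar v)"
  by (simp add: homogeneous_def order_ge_def coeff_scalar)

section \<open>Formal limits and inverses\<close>

definition formal_cauchy :: "(nat \<Rightarrow> alg) \<Rightarrow> bool" where
  "formal_cauchy S \<longleftrightarrow> (\<forall>n m. n \<le> m \<longrightarrow> order_ge n (S m - S n))"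

text \<open>For a Cauchy sequence the coefficient of a word of length \<open>n\<close> is constant from stage
  \<open>n + 1\<close> on, so it can be read off there.\<close>

definition formal_lim :: "(nat \<Rightarrow> alg) \<Rightarrow> alg" where
  "formal_lim S = Abs_alg (\<lambda>u p. coeff (S (Suc (length u))) u p)"

lemma formal_lim_approx:
  assumes "formal_cauchy S"
  shows "order_ge n (formal_lim S - S n)"
  unfolding order_ge_def
proof (intro allI impI)
  fix u :: word and p assume u: "length u < n"
  then have "order_ge (Suc (length u)) (S n - S (Suc (length u)))"
    using assms by (simp add: formal_cauchy_def)
  then have "coeff (S n) u p = coeff (S (Suc (length u))) u p"
    by (auto simp: order_ge_def coeff_diff)
  then show "coeff (formal_lim S - S n) u p = 0"
    by (simp add: formal_lim_def coeff_diff Abs_alg_inverse)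
qed

lemma graded_formal_lim: "(\<And>n. graded a (S n)) \<Longrightarrow> graded a (formal_lim S)"
  by (simp add: graded_def formal_lim_def Abs_alg_inverse)

lemma order_ge_of_formal_limit:
  assumes "formal_limit (\<lambda>m. coeff (S m)) (coeff L)" "\<And>m. m \<ge> n \<Longrightarrow> order_ge k (S m - S n)"
  shows "order_ge k (L - S n)"
  unfolding order_ge_def
proof (intro allI impI)
  fix u :: word and p assume u: "length u < k"
  from assms(1) have "eventually (\<lambda>m. coeff (S m) u p = coeff L u p) sequentially"
    by (simp add: formal_limit_def)
  then obtain N where N: "\<And>m. m \<ge> N \<Longrightarrow> coeff (S m) u p = coeff L u p"
    by (auto simp: eventually_sequentially)
  have "order_ge k (S (max N n) - S n)"
    using assms(2) by simp
  then have "coeff (S (max N n)) u p = coeff (S n) u p"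
    using u by (simp add: order_ge_def coeff_diff)
  then show "coeff (L - S n) u p = 0"
    using N[of "max N n"] by (simp add: coeff_diff)
qed

lemma formal_limit_of_order_ge:
  assumes "\<And>n. order_ge n (L - S n)"
  shows "formal_limit (\<lambda>m. coeff (S m)) (coeff L)"
  unfolding formal_limit_def eventually_sequentially
proof (intro allI)
  fix u :: word and p
  have "coeff (S m) u p = coeff L u p" if "Suc (length u) \<le> m" for m
    using order_geD[OF assms[of m], of u p] that by (simp add: coeff_diff)
  then show "\<exists>N. \<forall>m\<ge>N. coeff (S m) u p = coeff L u p"
    by blast
qed

lemma eq_of_order_ge_limit:
  assumes "\<And>n. order_ge n (L - S n)" "\<And>n. order_ge n (M - T n)" "\<And>n. S n * T n = c"
  shows "L * M = c"
proof -
  have "order_ge n (L * M - c)" for n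
    using order_ge_mult_cong[OF assms(1,2)] assms(3) by metis
  then show ?thesis
    using order_ge_all_zero by (metis eq_iff_diff_eq_0)
qed

lemma geometric_sum_ring_1:
  fixes z :: "'a::ring_1"
  shows "(1 - z) * (\<Sum>k<n. z ^ k) = 1 - z ^ n" "(\<Sum>k<n. z ^ k) * (1 - z) = 1 - z ^ n"
proof -
  show left: "(1 - z) * (\<Sum>k<n. z ^ k) = 1 - z ^ n"
  proof (induction n)
    case (Suc n)
    have "(1 - z) * (\<Sum>k<Suc n. z ^ k) = (1 - z) * (\<Sum>k<n. z ^ k) + (z ^ n - z * z ^ n)"
      by (simp add: algebra_simps)
    then show ?case
      using Suc.IH by simp
  qed simp
  have "z * (\<Sum>k<n. z ^ k) = (\<Sum>k<n. z ^ k) * z"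
    by (simp add: sum_distrib_left sum_distrib_right power_commutes)
  then show "(\<Sum>k<n. z ^ k) * (1 - z) = 1 - z ^ n"
    using left by (simp add: algebra_simps)
qed

lemma formal_cauchy_geometric:
  assumes "order_ge 1 z"
  shows "formal_cauchy (\<lambda>m. \<Sum>k<m. z ^ k)"
  unfolding formal_cauchy_def
proof (intro allI impI)
  fix n m :: nat assume "n \<le> m"
  then have "(\<Sum>k<m. z ^ k) - (\<Sum>k<n. z ^ k) = (\<Sum>k\<in>{n..<m}. z ^ k)"
    by (metis add_diff_cancel_left' atLeast0LessThan sum.atLeastLessThan_concat zero_le)
  also have "order_ge n \<dots>"
    by (rule order_ge_sum) (use order_ge_power[OF assms] order_ge_mono in auto)
  finally show "order_ge n ((\<Sum>k<m. z ^ k) - (\<Sum>k<n. z ^ k))" .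
qed

definition near_one :: "alg \<Rightarrow> bool" where
  "near_one x \<longleftrightarrow> graded (False, False) x \<and> order_ge 1 (x - 1)"

lemma near_one_one: "near_one 1"
  by (simp add: near_one_def graded_one order_ge_zero)

lemma near_one_mult:
  assumes "near_one a" "near_one b"
  shows "near_one (a * b)"
proof -
  have e: "a * b - 1 = (a - 1) * b + (b - 1)"
    by (simp add: algebra_simps)
  have "order_ge 1 ((a - 1) * b + (b - 1))"
    using assms unfolding near_one_def by (intro order_ge_add order_ge_mult_right) auto
  then show ?thesis
    using assms unfolding e[symmetric] near_one_def by (simp add: graded_mult_scalar)
qed

lemma near_one_scalar: "homogeneous i v \<Longrightarrow> 1 \<le> i \<Longrightarrow> near_one (1 + scalar v)"
  using order_ge_mono[OF order_ge_scalar] by (simp add: near_one_def graded_add graded_one graded_scalar)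

lemma near_one_invertible:
  assumes "near_one x"
  shows "\<exists>y. x * y = 1 \<and> y * x = 1 \<and> near_one y"
proof -
  define z where "z = 1 - x"
  have "order_ge 1 (- (x - 1))"
    using assms unfolding near_one_def by (blast intro: order_ge_uminus)
  then have z: "order_ge 1 z" "graded (False, False) z"
    using assms by (simp_all add: near_one_def z_def graded_diff graded_one)
  define S where "S m = (\<Sum>k<m. z ^ k)" for m
  have C: "formal_cauchy S"
    unfolding S_def by (rule formal_cauchy_geometric[OF z(1)])
  define y where "y = formal_lim S"
  have x: "x = 1 - z"
    by (simp add: z_def)
  have y: "order_ge n (y - S n)" for n
    unfolding y_def by (rule formal_lim_approx[OF C])
  have eqs: "x * y - 1 = x * (y - S n) - z ^ n" "y * x - 1 = (y - S n) * x - z ^ n" for n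
    using geometric_sum_ring_1[of z n] by (simp_all add: x S_def algebra_simps)
  have "order_ge n (x * y - 1)" "order_ge n (y * x - 1)" for n
    unfolding eqs[of n]
    by (rule order_ge_diff[OF order_ge_mult_left[OF y] order_ge_power[OF z(1)]],
        rule order_ge_diff[OF order_ge_mult_right[OF y] order_ge_power[OF z(1)]])
  then have "x * y = 1" "y * x = 1"
    using order_ge_all_zero by (metis eq_iff_diff_eq_0)+
  moreover have "graded (False, False) y"
    unfolding y_def S_def by (intro graded_formal_lim graded_sum_scalar graded_power_scalar z(2))
  moreover have "order_ge 1 (y - 1)"
    using formal_lim_approx[OF C, of 1] by (simp add: y_def S_def)
  ultimately show ?thesis
    by (auto simp: near_one_def)
qed

definition alg_inv :: "alg \<Rightarrow> alg" where
  "alg_inv x = (THE y. x * y = 1 \<and> y * x = 1)"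

lemma alg_inv_eq: "x * y = 1 \<Longrightarrow> y * x = 1 \<Longrightarrow> alg_inv x = y"
  unfolding alg_inv_def by (rule the_equality) (auto, metis mult.assoc mult_1_left mult_1_right)

lemma near_one_alg_inv:
  assumes "near_one x"
  shows "x * alg_inv x = 1" "alg_inv x * x = 1" "near_one (alg_inv x)"
  using near_one_invertible[OF assms] alg_inv_eq by auto

lemma alg_inv_mult:
  assumes "near_one a" "near_one b"
  shows "alg_inv (a * b) = alg_inv b * alg_inv a"
  using near_one_alg_inv[OF assms(1)] near_one_alg_inv[OF assms(2)]
  by (intro alg_inv_eq) (metis mult.assoc mult_1_left)+

lemma el_inv_coeff:
  assumes "x * y = 1" "y * x = 1"
  shows "el_inv (coeff x) = coeff y"
  unfolding el_inv_def
proof (rule the_equality)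
  show "el_mult (coeff x) (coeff y) = el_one \<and> el_mult (coeff y) (coeff x) = el_one"
    using assms by (metis one_alg.rep_eq coeff_mult)
next
  fix Y assume "el_mult (coeff x) Y = el_one \<and> el_mult Y (coeff x) = el_one"
  then have "x * Abs_alg Y = 1" "Abs_alg Y * x = 1"
    by (metis one_alg.rep_eq coeff_inverse coeff_inject coeff_mult Abs_alg_inverse UNIV_I)+
  then show "Y = coeff y"
    using assms by (metis Abs_alg_inverse UNIV_I alg_inv_eq)
qed

primrec unit_prod :: "(nat \<Rightarrow> series) \<Rightarrow> nat \<Rightarrow> alg" where
  "unit_prod U 0 = 1"
| "unit_prod U (Suc n) = (1 + scalar (U (Suc n))) * unit_prod U n"

definition conjugate :: "(nat \<Rightarrow> series) \<Rightarrow> nat \<Rightarrow> alg \<Rightarrow> alg" where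
  "conjugate U n x = unit_prod U n * x * alg_inv (unit_prod U n)"

lemma near_one_factor: "admissible U \<Longrightarrow> near_one (1 + scalar (U (Suc n)))"
  by (rule near_one_scalar[of "Suc n"]) (auto simp: admissible_def)

lemma near_one_unit_prod: "admissible U \<Longrightarrow> near_one (unit_prod U n)"
  by (induction n) (simp_all add: near_one_one near_one_mult near_one_factor)

lemma Pprod_eq: "Pprod U n = coeff (unit_prod U n)"
  by (induction n) (simp_all add: one_alg.rep_eq coeff_mult plus_alg.rep_eq fq_scalar_eq)

lemma Pinv_eq: "admissible U \<Longrightarrow> Pinv U n = coeff (alg_inv (unit_prod U n))"
proof (induction n)
  case 0
  have "alg_inv 1 = (1 :: alg)"
    by (rule alg_inv_eq) simp_all
  then show ?case
    by (simp add: one_alg.rep_eq)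
next
  case (Suc n)
  let ?a = "1 + scalar (U (Suc n))"
  have "el_add el_one (fq_scalar (U (Suc n))) = coeff ?a"
    by (simp add: plus_alg.rep_eq one_alg.rep_eq fq_scalar_eq)
  then have "el_inv (el_add el_one (fq_scalar (U (Suc n)))) = coeff (alg_inv ?a)"
    using near_one_alg_inv[OF near_one_factor[OF Suc.prems]] by (simp add: el_inv_coeff)
  then show ?case
    using Suc by (simp add: coeff_mult alg_inv_mult near_one_factor near_one_unit_prod)
qed

lemma conj_partial_eq: "admissible U \<Longrightarrow> conj_partial U n (coeff x) = coeff (conjugate U n x)"
  by (simp add: conj_partial_def conjugate_def Pprod_eq Pinv_eq coeff_mult)

lemma conjugate_0: "conjugate U 0 x = x"
  using alg_inv_eq[of "1::alg" 1] by (simp add: conjugate_def)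

lemma conjugate_Suc:
  "admissible U \<Longrightarrow> conjugate U (Suc n) x
     = (1 + scalar (U (Suc n))) * conjugate U n x * alg_inv (1 + scalar (U (Suc n)))"
  by (simp add: conjugate_def alg_inv_mult near_one_factor near_one_unit_prod mult.assoc)

lemma conjugate_mult: "admissible U \<Longrightarrow> conjugate U n x * conjugate U n y = conjugate U n (x * y)"
  using near_one_alg_inv(2)[OF near_one_unit_prod] unfolding conjugate_def
  by (metis mult.assoc mult_1_left)

lemma conjugate_add: "conjugate U n (x + y) = conjugate U n x + conjugate U n y"
  and conjugate_uminus: "conjugate U n (- x) = - conjugate U n x"
  and conjugate_zero: "conjugate U n 0 = 0"
  by (simp_all add: conjugate_def algebra_simps)

lemma conjugate_one: "admissible U \<Longrightarrow> conjugate U n 1 = 1"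
  using near_one_alg_inv(1)[OF near_one_unit_prod] by (simp add: conjugate_def)

lemma graded_conjugate:
  assumes "admissible U" "graded a x"
  shows "graded a (conjugate U n x)"
proof -
  have "graded (False, False) (unit_prod U n)" "graded (False, False) (alg_inv (unit_prod U n))"
    using near_one_unit_prod[OF assms(1)] near_one_alg_inv(3) by (auto simp: near_one_def)
  then have "graded (grade_add (grade_add (False, False) a) (False, False)) (conjugate U n x)"
    unfolding conjugate_def by (intro graded_mult assms(2))
  then show ?thesis by simp
qed

lemma conjugate_clifford:
  assumes "admissible U"
  shows "conjugate U n Q1 * conjugate U n Q1 = -1" "conjugate U n Q2 * conjugate U n Q2 = -1"
    "conjugate U n Q1 * conjugate U n Q2 + conjugate U n Q2 * conjugate U n Q1 = 0"
proof -
  have "Q1 * Q2 + Q2 * Q1 = 0"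
    by (simp add: Q1_Q2_anticommute)
  then show "conjugate U n Q1 * conjugate U n Q2 + conjugate U n Q2 * conjugate U n Q1 = 0"
    by (simp add: conjugate_mult[OF assms] conjugate_zero flip: conjugate_add)
qed (simp_all add: conjugate_mult[OF assms] Qmono_square conjugate_uminus conjugate_one[OF assms])

lemma order_ge_conj_near_one:
  assumes "order_ge k V" "(1 + V) * W = 1"
  shows "order_ge k ((1 + V) * C * W - C)"
proof -
  have "W - 1 = - (V * W)"
    using assms(2) by (simp add: algebra_simps)
  then have "(1 + V) * C * W - C = V * C * W + C * (- (V * W))"
    by (simp add: algebra_simps flip: \<open>W - 1 = - (V * W)\<close>)
  then show ?thesis
    using assms(1) by (simp only:) (intro order_ge_add order_ge_mult_right order_ge_mult_left order_ge_uminus)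
qed

text \<open>To first order in \<open>V\<close> the conjugate is \<open>C + V C - C V\<close>, and since \<open>C\<close> agrees with
  \<open>Q\<close> in degree 0 the commutator may be taken with \<open>Q\<close> instead of \<open>C\<close>.\<close>

lemma order_ge_conj_first_order:
  assumes "order_ge N V" "1 \<le> N" "(1 + V) * W = 1" "order_ge 1 (C - Q)"
  shows "order_ge (Suc N) ((1 + V) * C * W - (C + V * Q - Q * V))"
proof -
  have e: "(1 + V) * C * W - (C + V * Q - Q * V)
      = V * (C - Q) - (C - Q) * V + C * (V * V) * W - V * (C * V) * W
        - C * (1 - (1 + V) * W) - V * C * (1 - (1 + V) * W) + C * V * (1 - (1 + V) * W)"
    by (simp add: algebra_simps)
  have "order_ge (N + 1) (V * (C - Q))" "order_ge (1 + N) ((C - Q) * V)"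
    using order_ge_mult[OF assms(1) assms(4)] order_ge_mult[OF assms(4) assms(1)] .
  moreover have "order_ge (N + N) (C * (V * V) * W)" "order_ge (N + N) (V * (C * V) * W)"
    by (intro order_ge_mult_right order_ge_mult_left order_ge_mult assms(1))+
  ultimately show ?thesis
    unfolding e assms(3) using assms(2)
    by (auto intro!: order_ge_add order_ge_diff intro: order_ge_mono simp: order_ge_zero)
qed

lemma conjugate_cauchy:
  assumes "admissible U"
  shows "n \<le> m \<Longrightarrow> order_ge (Suc n) (conjugate U m x - conjugate U n x)"
proof (induction m)
  case (Suc m)
  show ?case
  proof (cases "n = Suc m")
    case False
    then have nm: "n \<le> m"
      using Suc by simp
    let ?V = "scalar (U (Suc m))"
    have "order_ge (Suc m) ?V"
      using assms by (intro order_ge_scalar) (simp add: admissible_def)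
    then have "order_ge (Suc n) ?V"
      using nm order_ge_mono by simp
    then have "order_ge (Suc n) ((1 + ?V) * conjugate U m x * alg_inv (1 + ?V) - conjugate U m x)"
      using near_one_alg_inv(1)[OF near_one_factor[OF assms]] by (rule order_ge_conj_near_one)
    then show ?thesis
      using Suc.IH[OF nm] order_ge_add conjugate_Suc[OF assms] by fastforce
  qed (simp add: order_ge_zero)
qed (simp add: order_ge_zero)

lemma order_ge_conjugate_diff: "admissible U \<Longrightarrow> order_ge 1 (conjugate U n x - x)"
  using conjugate_cauchy[of U 0 n x] by (simp add: conjugate_0)

lemma formal_lim_conjugate_approx:
  assumes "admissible U"
  shows "order_ge n (formal_lim (\<lambda>m. conjugate U m x) - conjugate U n x)"
proof (rule formal_lim_approx)
  show "formal_cauchy (\<lambda>m. conjugate U m x)"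
    unfolding formal_cauchy_def
    using conjugate_cauchy[OF assms] order_ge_mono by (meson le_SucI order_refl)
qed

lemma formal_limit_conjugate_approx:
  assumes "admissible U" "formal_limit (\<lambda>m. coeff (conjugate U m x)) (coeff L)"
  shows "order_ge (Suc m) (L - conjugate U m x)"
  by (rule order_ge_of_formal_limit[OF assms(2)]) (rule conjugate_cauchy[OF assms(1)])

section \<open>The degree-by-degree correction\<close>

lemma wsign_generators [simp]: "wsign u (True, False) = wsign1 u" "wsign u (False, True) = wsign2 u"
  by (simp_all add: wsign_def)

lemma coeff_commutator_Qmono:
  assumes "graded (False, False) V"
  shows "coeff (V * Qmono a - Qmono a * V) u p
    = (if p = a then (wsign u a - 1) * coeff V u (False, False) else 0)"
proof (cases "p = a")
  case False
  then have "grade_add a p \<noteq> (False, False)"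
    by (auto simp: grade_add_def prod_eq_iff)
  then show ?thesis
    using False assms by (simp add: coeff_diff coeff_mult_Qmono coeff_Qmono_mult gradedD)
qed (simp add: coeff_diff coeff_mult_Qmono coeff_Qmono_mult algebra_simps)

lemma coeff_anticommutator_Qmono:
  "a \<noteq> (False, False) \<Longrightarrow>
    coeff (Qmono a * D + D * Qmono a) u (False, False) = - (1 + wsign u a) * coeff D u a"
  by (simp add: coeff_add coeff_mult_Qmono coeff_Qmono_mult mono_sign_self algebra_simps)

lemma coeff_mixed_anticommutator:
  "coeff (Q1 * D2 + D2 * Q1 + D1 * Q2 + Q2 * D1) u (True, True)
     = (1 - wsign1 u) * coeff D2 u (False, True) + (wsign2 u - 1) * coeff D1 u (True, False)"
  by (simp add: coeff_add coeff_mult_Qmono coeff_Qmono_mult grade_add_def mono_sign_def qpar_def algebra_simps)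

lemma order_ge_sub_commutator:
  assumes "order_ge N D" "graded a D" "homogeneous N v"
    and "\<And>u. length u = N \<Longrightarrow> coeff D u a = (wsign u a - 1) * v u"
  shows "order_ge (Suc N) (D - (scalar v * Qmono a - Qmono a * scalar v))"
  unfolding order_ge_def
proof (intro allI impI)
  fix u :: word and p assume "length u < Suc N"
  then consider "length u < N" | "length u = N"
    by linarith
  then show "coeff (D - (scalar v * Qmono a - Qmono a * scalar v)) u p = 0"
  proof cases
    case 1
    then show ?thesis
      using assms(1,3) by (simp add: coeff_diff[of D] coeff_commutator_Qmono graded_scalar coeff_scalar
          order_geD homogeneous_def)
  next
    case 2
    then show ?thesis
      using assms(2,4) by (simp add: coeff_diff[of D] coeff_commutator_Qmono graded_scalar coeff_scalar gradedD)
  qed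
qed

text \<open>The degree-\<open>N\<close> solution \<open>V\<close> of \<open>V Q\<^sub>m - Q\<^sub>m V = D\<^sub>m\<close> (\<open>m = 1, 2\<close>): on a word anticommuting
  with \<open>Q\<^sub>m\<close> the commutator doubles the coefficient, and \<open>V\<close> is taken to vanish on words commuting
  with both \<open>Q\<^sub>1\<close> and \<open>Q\<^sub>2\<close>, which is the normalization.\<close>

definition correction :: "nat \<Rightarrow> alg \<Rightarrow> alg \<Rightarrow> series" where
  "correction N D1 D2 = (\<lambda>w. if length w = N then
      (if wsign1 w = -1 then - coeff D1 w (True, False) / 2
       else if wsign2 w = -1 then - coeff D2 w (False, True) / 2 else 0) else 0)"

lemma homogeneous_correction: "homogeneous N (correction N D1 D2)"
  by (simp add: homogeneous_def correction_def)

lemma correction_solves_coeffs: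
  assumes r1: "order_ge (Suc N) (Q1 * D1 + D1 * Q1)" and r2: "order_ge (Suc N) (Q2 * D2 + D2 * Q2)"
    and r12: "order_ge (Suc N) (Q1 * D2 + D2 * Q1 + D1 * Q2 + Q2 * D1)"
    and u: "length u = N"
  shows "coeff D1 u (True, False) = (wsign1 u - 1) * correction N D1 D2 u"
    "coeff D2 u (False, True) = (wsign2 u - 1) * correction N D1 D2 u"
proof -
  have a1: "- 1 = wsign1 u \<or> coeff D1 u (True, False) = 0"
    and a2: "- 1 = wsign2 u \<or> coeff D2 u (False, True) = 0"
    using order_geD[OF r1, of u "(False, False)"] order_geD[OF r2, of u "(False, False)"] u
    by (simp_all add: coeff_anticommutator_Qmono)
  have a12: "(1 - wsign1 u) * coeff D2 u (False, True) + (wsign2 u - 1) * coeff D1 u (True, False) = 0"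
    using order_geD[OF r12, of u "(True, True)"] u by (simp add: coeff_mixed_anticommutator)
  from wsign1_cases[of u] wsign2_cases[of u]
  show "coeff D1 u (True, False) = (wsign1 u - 1) * correction N D1 D2 u"
    "coeff D2 u (False, True) = (wsign2 u - 1) * correction N D1 D2 u"
    by (elim disjE; use a1 a2 a12 in \<open>simp add: correction_def u\<close>)+
qed

lemma order_ge_correction:
  assumes "order_ge N D1" "order_ge N D2" "graded (True, False) D1" "graded (False, True) D2"
    and "order_ge (Suc N) (Q1 * D1 + D1 * Q1)" "order_ge (Suc N) (Q2 * D2 + D2 * Q2)"
    and "order_ge (Suc N) (Q1 * D2 + D2 * Q1 + D1 * Q2 + Q2 * D1)"
  shows "order_ge (Suc N) (D1 - (scalar (correction N D1 D2) * Q1 - Q1 * scalar (correction N D1 D2)))"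
    "order_ge (Suc N) (D2 - (scalar (correction N D1 D2) * Q2 - Q2 * scalar (correction N D1 D2)))"
  using assms correction_solves_coeffs[OF assms(5-7)]
  by (auto intro!: order_ge_sub_commutator homogeneous_correction)

lemma homogeneous_commuting_zero:
  assumes "homogeneous N g" "\<And>w. wsign1 w = 1 \<Longrightarrow> wsign2 w = 1 \<Longrightarrow> g w = 0"
    and "order_ge (Suc N) (scalar g * Q1 - Q1 * scalar g)" "order_ge (Suc N) (scalar g * Q2 - Q2 * scalar g)"
  shows "g = (\<lambda>w. 0)"
proof
  fix w
  show "g w = 0"
  proof (cases "length w = N")
    case True
    then have "(wsign1 w - 1) * g w = 0" "(wsign2 w - 1) * g w = 0"
      using order_geD[OF assms(3), of w "(True, False)"] order_geD[OF assms(4), of w "(False, True)"]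
      by (simp_all add: coeff_commutator_Qmono graded_scalar coeff_scalar)
    then show ?thesis
      using wsign1_cases[of w] wsign2_cases[of w] assms(2)[of w] by auto
  qed (use assms(1) in \<open>simp add: homogeneous_def\<close>)
qed

lemma half0_Qmono_scalar:
  assumes "a \<noteq> (False, False)"
  shows "half0 (coeff (Qmono a)) (fq_scalar f) = fq_scalar (\<lambda>w. (1 + wsign w a) / 2 * f w)"
proof -
  have "el_inv (coeff (Qmono a)) = coeff (- Qmono a)"
    using Qmono_square[OF assms] by (intro el_inv_coeff) simp_all
  then have "el_mult (el_mult (el_inv (coeff (Qmono a))) (fq_scalar f)) (coeff (Qmono a))
      = coeff (- (Qmono a * (scalar f * Qmono a)))"
    by (simp add: fq_scalar_eq coeff_mult[symmetric] mult.assoc)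
  then show ?thesis
    using assms unfolding half0_def
    by (auto simp: fun_eq_iff el_scale_def el_add_def coeff_uminus coeff_Qmono_mult coeff_mult_Qmono
        coeff_scalar mono_sign_self grade_add_def fq_scalar_def algebra_simps)
qed

lemma normalized_iff:
  "normalized U \<longleftrightarrow> (\<forall>i\<ge>1. \<forall>w. wsign1 w = 1 \<and> wsign2 w = 1 \<longrightarrow> U i w = 0)"
proof -
  have half0_half0: "half0 (coeff Q2) (half0 (coeff Q1) (fq_scalar f))
      = fq_scalar (\<lambda>w. (1 + wsign2 w) / 2 * ((1 + wsign1 w) / 2 * f w))" for f
    by (simp add: half0_Qmono_scalar)
  have "(1 + wsign2 w) / 2 * ((1 + wsign1 w) / 2 * f w) = 0 \<longleftrightarrow> (wsign1 w = 1 \<and> wsign2 w = 1 \<longrightarrow> f w = 0)"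
    for f w using wsign1_cases[of w] wsign2_cases[of w] by auto
  then show ?thesis
    unfolding normalized_def el_Q1_eq el_Q2_eq half0_half0
    by (simp add: fq_scalar_def el_zero_def fun_eq_iff)
qed

lemma Psi1_eq: "Psi1 f = coeff (scalar f * Q1)"
  and Psi2_eq: "Psi2 f = coeff (scalar f * Q2)"
  by (simp_all add: Psi1_def Psi2_def coeff_mult fq_scalar_eq el_Q1_eq el_Q2_eq)

lemma scalar_mult_Qmono_coeff:
  assumes "graded a L"
  shows "scalar (\<lambda>w. wsign w a * coeff L w a) * Qmono a = L"
proof (rule alg_eqI)
  fix u p
  show "coeff (scalar (\<lambda>w. wsign w a * coeff L w a) * Qmono a) u p = coeff L u p"
  proof (cases "p = a")
    case False
    then have "grade_add a p \<noteq> (False, False)"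
      by (auto simp: grade_add_def prod_eq_iff)
    then show ?thesis
      using False assms by (simp add: coeff_mult_Qmono coeff_scalar gradedD)
  qed (simp add: coeff_mult_Qmono coeff_scalar mult.assoc[symmetric] wsign_grade_add)
qed

lemma clifford_productive_iff:
  "clifford_productive f1 f2 \<longleftrightarrow>
     scalar f1 * Q1 * (scalar f1 * Q1) = -1 \<and> scalar f2 * Q2 * (scalar f2 * Q2) = -1 \<and>
     scalar f1 * Q1 * (scalar f2 * Q2) + scalar f2 * Q2 * (scalar f1 * Q1) = 0"
  unfolding clifford_productive_def Psi1_eq Psi2_eq
  by (simp add: coeff_inject flip: coeff_mult one_alg.rep_eq uminus_alg.rep_eq plus_alg.rep_eq zero_alg.rep_eq)

lemma order_ge_1_scalar_mult_Qmono: "order_ge 1 (scalar f * Qmono a - Qmono a) \<longleftrightarrow> f [] = 1"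
proof -
  have "coeff (scalar f * Qmono a - Qmono a) [] p = (if p = a then f [] - 1 else 0)" for p
    by (cases "p = a") (auto simp: coeff_diff coeff_mult_Qmono coeff_scalar coeff_Qmono grade_add_def prod_eq_iff)
  then show ?thesis
    by (auto simp: order_ge_def)
qed

lemma clifford_conservative_iff:
  "clifford_conservative f1 f2 \<longleftrightarrow> order_ge 1 (scalar f1 * Q1 - Q1) \<and> order_ge 1 (scalar f2 * Q2 - Q2)"
  by (simp only: clifford_conservative_def order_ge_1_scalar_mult_Qmono)

lemma represents_iff:
  "admissible U \<Longrightarrow> represents U f1 f2 \<longleftrightarrow>
     formal_limit (\<lambda>n. coeff (conjugate U n Q1)) (coeff (scalar f1 * Q1)) \<and>
     formal_limit (\<lambda>n. coeff (conjugate U n Q2)) (coeff (scalar f2 * Q2))"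
  by (simp add: represents_def el_Q1_eq el_Q2_eq conj_partial_eq Psi1_eq Psi2_eq)

lemma represents_of_admissible:
  assumes adm: "admissible U"
  shows "\<exists>f1 f2. clifford_conservative f1 f2 \<and> clifford_productive f1 f2 \<and> represents U f1 f2"
proof -
  define L1 where "L1 = formal_lim (\<lambda>m. conjugate U m Q1)"
  define L2 where "L2 = formal_lim (\<lambda>m. conjugate U m Q2)"
  have a1: "order_ge n (L1 - conjugate U n Q1)" and a2: "order_ge n (L2 - conjugate U n Q2)" for n
    unfolding L1_def L2_def by (rule formal_lim_conjugate_approx[OF adm])+
  have "graded (True, False) L1" "graded (False, True) L2"
    unfolding L1_def L2_def by (intro graded_formal_lim graded_conjugate[OF adm] graded_Qmono)+
  then obtain f1 f2 where f: "scalar f1 * Q1 = L1" "scalar f2 * Q2 = L2"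
    using scalar_mult_Qmono_coeff by metis
  have "order_ge 1 (L1 - Q1)" "order_ge 1 (L2 - Q2)"
    using order_ge_add[OF a1[of 1] order_ge_conjugate_diff[OF adm, of 1 Q1]]
      order_ge_add[OF a2[of 1] order_ge_conjugate_diff[OF adm, of 1 Q2]] by simp_all
  then have "clifford_conservative f1 f2"
    by (simp add: clifford_conservative_iff f)
  moreover have "L1 * L1 = -1"
    by (rule eq_of_order_ge_limit[OF a1 a1 conjugate_clifford(1)[OF adm]])
  moreover have "L2 * L2 = -1"
    by (rule eq_of_order_ge_limit[OF a2 a2 conjugate_clifford(2)[OF adm]])
  moreover have "L1 * L2 + L2 * L1 = 0"
  proof (rule order_ge_all_zero)
    fix n
    have "order_ge n ((L1 * L2 - conjugate U n Q1 * conjugate U n Q2) + (L2 * L1 - conjugate U n Q2 * conjugate U n Q1))"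
      by (intro order_ge_add order_ge_mult_cong a1 a2)
    then show "order_ge n (L1 * L2 + L2 * L1)"
      using conjugate_clifford(3)[OF adm, of n] by (metis add_diff_add diff_zero)
  qed
  ultimately have "clifford_conservative f1 f2 \<and> clifford_productive f1 f2"
    by (simp add: clifford_productive_iff f)
  moreover have "represents U f1 f2"
    unfolding represents_iff[OF adm] f by (intro conjI formal_limit_of_order_ge a1 a2)
  ultimately show ?thesis
    by blast
qed

lemma order_ge_anticommutator_defect:
  assumes "X * X = C * C" "order_ge 1 (C - Q)" "order_ge N (X - C)" "1 \<le> N"
  shows "order_ge (Suc N) (Q * (X - C) + (X - C) * Q)"
proof -
  have "Q * (X - C) + (X - C) * Q = (X * X - C * C) - (C - Q) * (X - C) - (X - C) * (C - Q) - (X - C) * (X - C)"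
    by (simp add: algebra_simps)
  moreover have "order_ge (Suc N) ((X - C) * (X - C))"
    using order_ge_mono[OF order_ge_mult[OF assms(3) assms(3)]] assms(4) by simp
  ultimately show ?thesis
    using order_ge_mult[OF assms(2) assms(3)] order_ge_mult[OF assms(3) assms(2)] assms(1)
    by (auto intro!: order_ge_diff order_ge_uminus simp: order_ge_zero)
qed

lemma order_ge_mixed_anticommutator_defect:
  assumes "X * Y + Y * X = C * E + E * C" "order_ge 1 (C - P)" "order_ge 1 (E - R)"
    and "order_ge N (X - C)" "order_ge N (Y - E)" "1 \<le> N"
  shows "order_ge (Suc N) (P * (Y - E) + (Y - E) * P + (X - C) * R + R * (X - C))"
proof -
  have "P * (Y - E) + (Y - E) * P + (X - C) * R + R * (X - C)
      = (X * Y + Y * X - (C * E + E * C)) - (C - P) * (Y - E) - (Y - E) * (C - P)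
        - (X - C) * (E - R) - (E - R) * (X - C) - (X - C) * (Y - E) - (Y - E) * (X - C)"
    by (simp add: algebra_simps)
  moreover have "order_ge (Suc N) ((X - C) * (Y - E))" "order_ge (Suc N) ((Y - E) * (X - C))"
    using order_ge_mono[OF order_ge_mult[OF assms(4) assms(5)]] order_ge_mono[OF order_ge_mult[OF assms(5) assms(4)]]
      assms(6) by simp_all
  ultimately show ?thesis
    using order_ge_mult[OF assms(2) assms(5)] order_ge_mult[OF assms(5) assms(2)]
      order_ge_mult[OF assms(4) assms(3)] order_ge_mult[OF assms(3) assms(4)] assms(1)
    by (auto intro!: order_ge_diff order_ge_uminus simp: order_ge_zero)
qed

lemma order_ge_conjugate_correction:
  assumes adm: "admissible U"
    and AB: "A * A = -1" "B * B = -1" "A * B + B * A = 0" "graded (True, False) A" "graded (False, True) B"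
    and approx: "order_ge N (A - conjugate U n Q1)" "order_ge N (B - conjugate U n Q2)"
    and N: "N = Suc n"
    and U: "U N = correction N (A - conjugate U n Q1) (B - conjugate U n Q2)"
  shows "order_ge (Suc N) (A - conjugate U N Q1)" "order_ge (Suc N) (B - conjugate U N Q2)"
proof -
  define C1 C2 where "C1 = conjugate U n Q1" and "C2 = conjugate U n Q2"
  define V where "V = scalar (U N)"
  have C: "C1 * C1 = -1" "C2 * C2 = -1" "C1 * C2 + C2 * C1 = 0" "order_ge 1 (C1 - Q1)" "order_ge 1 (C2 - Q2)"
    unfolding C1_def C2_def by (rule conjugate_clifford[OF adm] order_ge_conjugate_diff[OF adm])+
  have N1: "1 \<le> N"
    by (simp add: N)
  have "graded (True, False) (A - C1)" "graded (False, True) (B - C2)"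
    unfolding C1_def C2_def by (intro graded_diff AB graded_conjugate[OF adm] graded_Qmono)+
  moreover have "order_ge (Suc N) (Q1 * (A - C1) + (A - C1) * Q1)" "order_ge (Suc N) (Q2 * (B - C2) + (B - C2) * Q2)"
    "order_ge (Suc N) (Q1 * (B - C2) + (B - C2) * Q1 + (A - C1) * Q2 + Q2 * (A - C1))"
    using approx AB C N1 unfolding C1_def[symmetric] C2_def[symmetric]
    by (auto intro!: order_ge_anticommutator_defect order_ge_mixed_anticommutator_defect)
  ultimately have corr: "order_ge (Suc N) ((A - C1) - (V * Q1 - Q1 * V))" "order_ge (Suc N) ((B - C2) - (V * Q2 - Q2 * V))"
    using order_ge_correction[of N "A - C1" "B - C2"] approx U
    unfolding V_def C1_def[symmetric] C2_def[symmetric] by auto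
  have V: "order_ge N V" "(1 + V) * alg_inv (1 + V) = 1"
    using adm N1 near_one_alg_inv(1)[OF near_one_factor[OF adm, of n]]
    by (auto simp: V_def N admissible_def intro: order_ge_scalar)
  have s: "order_ge (Suc N) (conjugate U N Q1 - (C1 + V * Q1 - Q1 * V))"
    "order_ge (Suc N) (conjugate U N Q2 - (C2 + V * Q2 - Q2 * V))"
    unfolding N conjugate_Suc[OF adm] C1_def C2_def V_def
    by (intro order_ge_conj_first_order[OF V(1)[unfolded V_def N] _ V(2)[unfolded V_def N]]
        order_ge_conjugate_diff[OF adm], simp)+
  have "A - conjugate U N Q1 = ((A - C1) - (V * Q1 - Q1 * V)) - (conjugate U N Q1 - (C1 + V * Q1 - Q1 * V))"
    "B - conjugate U N Q2 = ((B - C2) - (V * Q2 - Q2 * V)) - (conjugate U N Q2 - (C2 + V * Q2 - Q2 * V))"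
    by (simp_all add: algebra_simps)
  then show "order_ge (Suc N) (A - conjugate U N Q1)" "order_ge (Suc N) (B - conjugate U N Q2)"
    using order_ge_diff[OF corr(1) s(1)] order_ge_diff[OF corr(2) s(2)] by simp_all
qed

definition correction_after :: "alg \<Rightarrow> alg \<Rightarrow> nat \<Rightarrow> alg \<Rightarrow> series" where
  "correction_after A B N P = correction N (A - P * Q1 * alg_inv P) (B - P * Q2 * alg_inv P)"

primrec normal_prod :: "alg \<Rightarrow> alg \<Rightarrow> nat \<Rightarrow> alg" where
  "normal_prod A B 0 = 1"
| "normal_prod A B (Suc n) = (1 + scalar (correction_after A B (Suc n) (normal_prod A B n))) * normal_prod A B n"

definition normal_seq :: "alg \<Rightarrow> alg \<Rightarrow> nat \<Rightarrow> series" where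
  "normal_seq A B k = (if k = 0 then (\<lambda>w. 0) else correction_after A B k (normal_prod A B (k - 1)))"

lemma admissible_normal_seq: "admissible (normal_seq A B)"
  by (simp add: admissible_def normal_seq_def correction_after_def homogeneous_correction)

lemma normalized_normal_seq: "normalized (normal_seq A B)"
  by (simp add: normalized_iff normal_seq_def correction_after_def correction_def)

lemma unit_prod_normal_seq: "unit_prod (normal_seq A B) n = normal_prod A B n"
  by (induction n) (simp_all add: normal_seq_def)

lemma normal_seq_Suc:
  "normal_seq A B (Suc n)
     = correction (Suc n) (A - conjugate (normal_seq A B) n Q1) (B - conjugate (normal_seq A B) n Q2)"
  by (simp add: normal_seq_def correction_after_def conjugate_def unit_prod_normal_seq)

lemma normalized_representation_exists:
  assumes "clifford_conservative f1 f2" "clifford_productive f1 f2"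
  shows "\<exists>U. admissible U \<and> normalized U \<and> represents U f1 f2"
proof -
  define A B where "A = scalar f1 * Q1" and "B = scalar f2 * Q2"
  define U where "U = normal_seq A B"
  have adm: "admissible U"
    unfolding U_def by (rule admissible_normal_seq)
  have AB: "A * A = -1" "B * B = -1" "A * B + B * A = 0"
    using assms(2) by (simp_all add: clifford_productive_iff A_def B_def)
  have graded: "graded (True, False) A" "graded (False, True) B"
    unfolding A_def B_def using graded_mult[OF graded_scalar graded_Qmono] by simp_all
  have approx: "order_ge (Suc n) (A - conjugate U n Q1) \<and> order_ge (Suc n) (B - conjugate U n Q2)" for n
  proof (induction n)
    case 0
    then show ?case
      using assms(1) by (simp add: clifford_conservative_iff A_def B_def conjugate_0)
  next
    case (Suc n)
    then show ?case
      using order_ge_conjugate_correction[OF adm AB graded _ _ refl] normal_seq_Suc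
      unfolding U_def by blast
  qed
  have "order_ge n (A - conjugate U n Q1)" "order_ge n (B - conjugate U n Q2)" for n
    using approx[of n] order_ge_mono[of "Suc n" _ n] by auto
  then have "represents U f1 f2"
    unfolding represents_iff[OF adm] A_def[symmetric] B_def[symmetric]
    by (intro conjI formal_limit_of_order_ge)
  then show ?thesis
    using adm normalized_normal_seq unfolding U_def by blast
qed

lemma unit_prod_cong: "(\<And>k. 1 \<le> k \<Longrightarrow> k \<le> n \<Longrightarrow> U k = U' k) \<Longrightarrow> unit_prod U n = unit_prod U' n"
  by (induction n) auto

lemma order_ge_commutator_of_common_limit:
  assumes adm: "admissible U" "admissible U'" and prod: "unit_prod U n = unit_prod U' n"
    and lim: "formal_limit (\<lambda>m. coeff (conjugate U m Q)) (coeff L)"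
      "formal_limit (\<lambda>m. coeff (conjugate U' m Q)) (coeff L)"
  shows "order_ge (Suc (Suc n))
    ((scalar (U (Suc n)) - scalar (U' (Suc n))) * Q - Q * (scalar (U (Suc n)) - scalar (U' (Suc n))))"
proof -
  define V V' where "V = scalar (U (Suc n))" and "V' = scalar (U' (Suc n))"
  define C where "C = conjugate U n Q"
  have "conjugate U' n Q = C"
    by (simp add: C_def conjugate_def prod)
  then have s: "order_ge (Suc (Suc n)) (conjugate U (Suc n) Q - (C + V * Q - Q * V))"
    "order_ge (Suc (Suc n)) (conjugate U' (Suc n) Q - (C + V' * Q - Q * V'))"
    using adm unfolding C_def V_def V'_def
    by (auto simp: conjugate_Suc admissible_def intro!: order_ge_conj_first_order order_ge_scalar
        near_one_alg_inv(1)[OF near_one_factor] order_ge_conjugate_diff)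
  have "(V - V') * Q - Q * (V - V') = ((L - conjugate U' (Suc n) Q) - (L - conjugate U (Suc n) Q))
      - (conjugate U (Suc n) Q - (C + V * Q - Q * V)) + (conjugate U' (Suc n) Q - (C + V' * Q - Q * V'))"
    by (simp add: algebra_simps)
  also have "order_ge (Suc (Suc n)) \<dots>"
    by (intro order_ge_add order_ge_diff s formal_limit_conjugate_approx[OF adm(1) lim(1)]
        formal_limit_conjugate_approx[OF adm(2) lim(2)])
  finally show ?thesis
    unfolding V_def V'_def .
qed

lemma normalized_representation_unique:
  assumes "admissible U" "normalized U" "represents U f1 f2"
    and "admissible U'" "normalized U'" "represents U' f1 f2"
  shows "\<forall>i\<ge>1. U i = U' i"
proof -
  have lim: "formal_limit (\<lambda>m. coeff (conjugate U m Q1)) (coeff (scalar f1 * Q1))"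
    "formal_limit (\<lambda>m. coeff (conjugate U' m Q1)) (coeff (scalar f1 * Q1))"
    "formal_limit (\<lambda>m. coeff (conjugate U m Q2)) (coeff (scalar f2 * Q2))"
    "formal_limit (\<lambda>m. coeff (conjugate U' m Q2)) (coeff (scalar f2 * Q2))"
    using assms by (simp_all add: represents_iff)
  have "\<forall>k. 1 \<le> k \<longrightarrow> k \<le> n \<longrightarrow> U k = U' k" for n
  proof (induction n)
    case (Suc n)
    have prod: "unit_prod U n = unit_prod U' n"
      using Suc.IH by (intro unit_prod_cong) auto
    define g where "g w = U (Suc n) w - U' (Suc n) w" for w
    have "scalar g = scalar (U (Suc n)) - scalar (U' (Suc n))"
      by (rule alg_eqI) (simp add: g_def coeff_scalar coeff_diff)
    moreover have "homogeneous (Suc n) g"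
      using assms(1,4) by (auto simp: admissible_def homogeneous_def g_def)
    moreover have "g w = 0" if "wsign1 w = 1" "wsign2 w = 1" for w
      using assms(2,5) that by (simp add: normalized_iff g_def)
    ultimately have "g = (\<lambda>w. 0)"
      using order_ge_commutator_of_common_limit[OF assms(1,4) prod lim(1,2)]
        order_ge_commutator_of_common_limit[OF assms(1,4) prod lim(3,4)]
      by (intro homogeneous_commuting_zero) auto
    then show ?case
      using Suc.IH by (auto simp: le_Suc_eq fun_eq_iff g_def)
  qed simp
  then show ?thesis
    by blast
qed

theorem mainTheorem12:
  shows "(\<forall>f1 f2. clifford_conservative f1 f2 \<and> clifford_productive f1 f2 \<longrightarrow>
            (\<exists>U. admissible U \<and> normalized U \<and> represents U f1 f2) \<and>
            (\<forall>U U'. admissible U \<and> normalized U \<and> represents U f1 f2 \<and>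
                    admissible U' \<and> normalized U' \<and> represents U' f1 f2 \<longrightarrow>
                    (\<forall>i\<ge>1. U i = U' i))) \<and>
         (\<forall>U. admissible U \<longrightarrow>
            (\<exists>f1 f2. clifford_conservative f1 f2 \<and> clifford_productive f1 f2 \<and>
                     represents U f1 f2))"
  using normalized_representation_exists normalized_representation_unique represents_of_admissible
  by blast

end
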